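(* Let $p$ be a prime and let $B(z)=B_0+zB_1+z^2B_2$ be a $2\times2$ matrix polynomial of degree $2$ in $z$, with $B_0,B_1,B_2$ $2\times 2$ matrices with entries in a commutative ring of characteristic $p$. Then $$\operatorname{Tr}[B(z+p-1)B(z+p-2)\cdots B(z+1)B(z)]=(z^p-z)^2\operatorname{Tr}B_2^p-(z^p-z)\operatorname{Tr}(B_2^{p-1}B_1)+(z^p-z)\operatorname{Tr}B_1^p+\operatorname{Tr}[B(p-1)B(p-2)\cdots B(1)B(0)].$$ *)

theory Defs
  imports "HOL-Analysis.Analysis" "HOL-Computational_Algebra.Polynomial"
begin

primrec matpow :: "'a::semiring_1^'n^'n \<Rightarrow> nat \<Rightarrow> 'a^'n^'n" where
  "matpow A 0 = mat 1"
| "matpow A (Suc n) = A ** matpow A n"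

primrec matprod_down :: "(nat \<Rightarrow> 'a::semiring_1^'n^'n) \<Rightarrow> nat \<Rightarrow> 'a^'n^'n" where
  "matprod_down f 0 = mat 1"
| "matprod_down f (Suc n) = f n ** matprod_down f n"

text \<open>The matrix polynomial B(s) = B0 + s B1 + s^2 B2, evaluated at a polynomial s
  in the indeterminate z, giving a matrix over 'a poly.\<close>
definition Bpoly :: "'a::comm_ring_1^'n^'n \<Rightarrow> 'a^'n^'n \<Rightarrow> 'a^'n^'n \<Rightarrow> 'a poly \<Rightarrow> 'a poly^'n^'n" where
  "Bpoly B0 B1 B2 s = (\<chi> i j. [:B0$i$j:] + s * [:B1$i$j:] + s^2 * [:B2$i$j:])"

definition Bval :: "'a::comm_ring_1^'n^'n \<Rightarrow> 'a^'n^'n \<Rightarrow> 'a^'n^'n \<Rightarrow> 'a \<Rightarrow> 'a^'n^'n" where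
  "Bval B0 B1 B2 c = (\<chi> i j. B0$i$j + c * B1$i$j + c^2 * B2$i$j)"

end

theory Submission
  imports Defs "HOL-Computational_Algebra.Primes" "HOL-Number_Theory.Cong"
begin

(* Multiplying out B(z+p-1) \<cdots> B(z) writes its trace as a sum over words e in {0,1,2}^p of
   tr(B_e(p-1) \<cdots> B_e(0)) \<cdot> \<Prod>k (z+k)^e(k).  Since \<Prod>k<p (z+k) = z^p - z in characteristic p,
   the three constant words give the terms tr(B_i^p) (z^p - z)^i.  Rotating a word does not change
   its trace and replaces z by z + r in its polynomial, so the nonconstant words, whose rotation
   orbits have length p, contribute \<Sum>r<p G(z+r), where G is a weighted sum of one orbit's worth of
   words and has degree < 2p.  Such a sum is invariant under z \<mapsto> z + 1, hence equal to
   c (z^p - z) plus a constant, and the power sums \<Sum>r<p r^j (0 for j < p - 1, -1 for j = p - 1)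
   give c = -(coefficient of z^(2p-1) in G).  The words of degree 2p - 1 are the rotations of
   (1,2,...,2), of which G keeps only (1,2,...,2) itself; hence c = -tr(B_2^(p-1) B_1). *)

section \<open>Arithmetic in prime characteristic\<close>

lemma of_nat_eq_0_CHAR: "CHAR('a::semiring_1) = p \<Longrightarrow> (of_nat p :: 'a) = 0"
  by (metis of_nat_CHAR)

lemma of_nat_mod_CHAR: "CHAR('a::semiring_1_cancel) = p \<Longrightarrow> (of_nat (m mod p) :: 'a) = of_nat m"
  by (subst of_nat_eq_iff_cong_CHAR) (simp add: cong_def)

lemma of_nat_mult_eq_0_CHAR:
  assumes "prime p" "CHAR('a::comm_ring_1) = p" "\<not> p dvd n"
  shows "of_nat n * x = (0::'a) \<longleftrightarrow> x = 0"
proof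
  assume nx: "of_nat n * x = 0"
  have "coprime n p"
    using assms(1,3) by (metis coprime_commute prime_imp_coprime)
  then obtain u where "[n * u = 1] (mod p)"
    using cong_solve_coprime_nat by auto
  then have "of_nat n * of_nat u = (1::'a)"
    using assms(2) by (metis of_nat_1 of_nat_mult of_nat_eq_iff_cong_CHAR)
  then have "x = of_nat u * (of_nat n * x)"
    by (metis mult.assoc mult.commute mult_1)
  with nx show "x = 0" by simp
qed simp

lemma of_nat_power_CHAR:
  assumes "prime p" "CHAR('a::comm_ring_1) = p"
  shows "(of_nat r :: 'a) ^ p = of_nat r"
proof -
  have "(of_nat r :: 'a) = (\<Sum>i<r. 1)" by simp
  also have "\<dots> ^ p = (\<Sum>i<r. 1 ^ p)"
    using assms by (intro freshmans_dream_sum) simp_all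
  finally show ?thesis by simp
qed

lemma of_nat_power_pred_CHAR:
  assumes "prime p" "CHAR('a::comm_ring_1) = p" "\<not> p dvd n"
  shows "(of_nat n :: 'a) ^ (p - 1) = 1"
proof -
  have "of_nat n * ((of_nat n :: 'a) ^ (p - 1) - 1) = of_nat n ^ p - of_nat n"
    using prime_gt_0_nat[OF assms(1)] by (simp add: algebra_simps power_eq_if)
  also have "\<dots> = 0"
    using of_nat_power_CHAR[OF assms(1,2)] by simp
  finally show ?thesis
    using of_nat_mult_eq_0_CHAR[OF assms] by simp
qed

lemma sum_of_nat_power_eq_0_CHAR:
  assumes "prime p" "CHAR('a::comm_ring_1) = p" "j + 1 < p"
  shows "(\<Sum>r<p. (of_nat r :: 'a) ^ j) = 0"
  using assms(3)
proof (induction j rule: less_induct)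
  case (less j)
  have step: "(of_nat (Suc r) :: 'a) ^ Suc j - of_nat r ^ Suc j
      = (\<Sum>i<Suc j. of_nat (Suc j choose i) * of_nat r ^ i)" for r
  proof -
    have "(of_nat r + 1 :: 'a) ^ Suc j = (\<Sum>i<Suc (Suc j). of_nat (Suc j choose i) * of_nat r ^ i)"
      using binomial_ring[of "of_nat r" "1::'a" "Suc j"] by (simp only: lessThan_Suc_atMost) simp
    then show ?thesis
      by (simp only: sum.lessThan_Suc[of _ "Suc j"]) (simp add: add.commute)
  qed
  have "0 = (\<Sum>r<p. (of_nat (Suc r) :: 'a) ^ Suc j - of_nat r ^ Suc j)"
    using of_nat_eq_0_CHAR[OF assms(2)]
    by (subst sum_lessThan_telescope[where f = "\<lambda>r. of_nat r ^ Suc j"]) simp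
  also have "\<dots> = (\<Sum>i<Suc j. of_nat (Suc j choose i) * (\<Sum>r<p. (of_nat r :: 'a) ^ i))"
    by (simp only: step sum_distrib_left) (rule sum.swap)
  also have "\<dots> = of_nat (Suc j) * (\<Sum>r<p. (of_nat r :: 'a) ^ j)"
    using less by simp
  finally show ?case
    using of_nat_mult_eq_0_CHAR[OF assms(1,2), of "Suc j"] less.prems
    by (simp add: nat_dvd_not_less)
qed

lemma sum_of_nat_power_pred_CHAR:
  assumes "prime p" "CHAR('a::comm_ring_1) = p"
  shows "(\<Sum>r<p. (of_nat r :: 'a) ^ (p - 1)) = -1"
proof -
  have p2: "p \<ge> 2" using assms(1) prime_ge_2_nat by blast
  have "(\<Sum>r<p. (of_nat r :: 'a) ^ (p - 1)) = (\<Sum>r\<in>{..<p} - {0}. 1)"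
    using p2 of_nat_power_pred_CHAR[OF assms]
    by (intro sum.mono_neutral_cong_right) (auto simp: power_0_left nat_dvd_not_less)
  also have "\<dots> = of_nat p - 1"
    using p2 by simp
  finally show ?thesis
    using of_nat_eq_0_CHAR[OF assms(2)] by simp
qed

lemma of_nat_choose_double_pred_CHAR:
  assumes "prime p" "CHAR('a::comm_ring_1) = p"
  shows "(of_nat ((2 * p - 1) choose p) :: 'a) = 1"
proof -
  have p2: "p \<ge> 2" using assms(1) prime_ge_2_nat by blast
  have "[:1, 1:] ^ p = ([:0, 1:] + 1 :: 'a poly) ^ p"
    by (simp add: one_pCons)
  also have "\<dots> = monom 1 p + 1"
    using assms by (subst freshmans_dream) (simp_all add: monom_altdef)
  moreover have "2 * p - 1 = p + (p - 1)"
    using p2 by simp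
  ultimately have "[:1, 1:] ^ (2 * p - 1) = (monom 1 p + 1) * [:1, 1 :: 'a:] ^ (p - 1)"
    by (simp only: power_add)
  then have "coeff ([:1, 1 :: 'a:] ^ (2 * p - 1)) p
      = coeff ([:1, 1 :: 'a:] ^ (p - 1)) 0 + coeff ([:1, 1 :: 'a:] ^ (p - 1)) p"
    by (simp add: distrib_right coeff_monom_mult)
  also have "\<dots> = 1"
  proof -
    have "degree ([:1, 1 :: 'a:] ^ (p - 1)) < p"
      using p2 by (simp add: degree_linear_power)
    then show ?thesis
      by (simp add: coeff_eq_0 coeff_linear_poly_power)
  qed
  finally show ?thesis
    using p2 by (simp add: coeff_linear_poly_power)
qed

section \<open>Shift-invariant polynomials\<close>

lemma monic_mult:
  fixes f g :: "'a::comm_semiring_1 poly"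
  assumes "lead_coeff f = 1" "lead_coeff g = 1"
  shows "lead_coeff (f * g) = 1"
    and "degree (f * g) = degree f + degree g"
proof -
  have coeff_sum: "coeff (f * g) (degree f + degree g) = 1"
    using assms by (simp add: coeff_mult_degree_sum)
  then have "degree f + degree g \<le> degree (f * g)"
    by (intro le_degree) simp
  then show "degree (f * g) = degree f + degree g"
    using degree_mult_le[of f g] by simp
  with coeff_sum show "lead_coeff (f * g) = 1"
    by simp
qed

lemma monic_prod:
  fixes f :: "'b \<Rightarrow> 'a::comm_semiring_1 poly"
  assumes "\<And>x. x \<in> A \<Longrightarrow> lead_coeff (f x) = 1"
  shows "lead_coeff (prod f A) = 1 \<and> degree (prod f A) = (\<Sum>x\<in>A. degree (f x))"
  using assms
proof (induction A rule: infinite_finite_induct)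
  case (insert x A)
  then have fx: "lead_coeff (f x) = 1" and IH: "lead_coeff (prod f A) = 1"
    "degree (prod f A) = (\<Sum>x\<in>A. degree (f x))"
    by auto
  show ?case
    using insert.hyps monic_mult[OF fx IH(1)] IH(2) by simp
qed simp_all

lemma pcompose_power: "pcompose (g ^ n) q = pcompose g q ^ n"
  by (induction n) (simp_all add: pcompose_1 pcompose_mult)

lemma coeff_pcompose_shift:
  fixes g :: "'a::comm_semiring_1 poly"
  assumes "degree g \<le> N"
  shows "coeff (pcompose g [:a, 1:]) n = (\<Sum>i\<le>N. coeff g i * of_nat (i choose n) * a ^ (i - n))"
proof -
  have coeff_power: "coeff ([:a, 1:] ^ i) n = of_nat (i choose n) * a ^ (i - n)" for i
  proof (cases "n \<le> i")
    case False
    then have "degree ([:a, 1:] ^ i) < n"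
      by (simp add: degree_linear_power)
    with False show ?thesis
      by (simp add: coeff_eq_0 binomial_eq_0)
  qed (simp add: coeff_linear_poly_power)
  have "pcompose g [:a, 1:] = (\<Sum>i\<le>N. smult (coeff g i) ([:a, 1:] ^ i))"
    by (subst poly_as_sum_of_monoms'[OF assms, symmetric])
       (simp add: pcompose_sum monom_altdef pcompose_smult pcompose_power pcompose_pCons)
  then show ?thesis
    by (simp add: coeff_sum coeff_power mult.assoc)
qed

text \<open>Comparing the coefficients of z^(d-1) in g(z+1) = g(z), where d = degree g,
  gives d \<cdot> lead_coeff g = 0.\<close>

lemma shift_invariant_dvd_degree:
  fixes g :: "'a::comm_ring_1 poly"
  assumes "prime p" "CHAR('a) = p" "pcompose g [:1, 1:] = g"
  shows "p dvd degree g"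
proof (rule ccontr)
  assume not_dvd: "\<not> p dvd degree g"
  then obtain m where m: "degree g = Suc m"
    by (cases "degree g") auto
  have "coeff g m = (\<Sum>i\<le>Suc m. coeff g i * of_nat (i choose m))"
    using coeff_pcompose_shift[of g "Suc m" 1 m] assms(3) m by simp
  also have "\<dots> = (\<Sum>i<m. coeff g i * of_nat (i choose m)) + coeff g m
      + coeff g (Suc m) * of_nat (Suc m)"
    by (simp only: sum.atMost_Suc flip: lessThan_Suc_atMost) simp
  also have "\<dots> = coeff g m + of_nat (Suc m) * lead_coeff g"
    using m by (simp add: binomial_eq_0 mult.commute)
  finally have "lead_coeff g = 0"
    using of_nat_mult_eq_0_CHAR[OF assms(1,2) not_dvd[unfolded m]] m by simp
  with m show False
    by (metis leading_coeff_0_iff degree_0 nat.distinct(1))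
qed

lemma coeff_X_power_minus_X:
  assumes "p \<noteq> 1"
  shows "coeff ([:0, 1:] ^ p - [:0, 1:] :: 'a::comm_ring_1 poly) n
    = (if n = p then 1 else if n = 1 then -1 else 0)"
proof -
  have "[:0, 1:] ^ p - [:0, 1:] = (monom 1 p - monom 1 1 :: 'a poly)"
    by (simp add: monom_altdef)
  with assms show ?thesis
    by simp
qed

lemma degree_X_power_minus_X:
  assumes "p \<ge> 2"
  shows "degree ([:0, 1:] ^ p - [:0, 1:] :: 'a::comm_ring_1 poly) = p"
proof (rule antisym)
  show "degree ([:0, 1:] ^ p - [:0, 1:] :: 'a poly) \<le> p"
    using assms by (intro degree_le) (simp add: coeff_X_power_minus_X del: coeff_diff)
  show "p \<le> degree ([:0, 1:] ^ p - [:0, 1:] :: 'a poly)"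
    using assms by (intro le_degree) (simp add: coeff_X_power_minus_X del: coeff_diff)
qed

lemma shift_invariant_X_power_minus_X:
  assumes "prime p" "CHAR('a::comm_ring_1) = p"
  shows "pcompose ([:0, 1:] ^ p - [:0, 1:] :: 'a poly) [:1, 1:] = [:0, 1:] ^ p - [:0, 1:]"
proof -
  have "pcompose ([:0, 1:] ^ p - [:0, 1:] :: 'a poly) [:1, 1:] = ([:0, 1:] + 1) ^ p - ([:0, 1:] + 1)"
    by (simp add: pcompose_diff pcompose_power pcompose_pCons one_pCons)
  also have "([:0, 1:] + 1 :: 'a poly) ^ p = [:0, 1:] ^ p + 1"
    using assms by (subst freshmans_dream) simp_all
  finally show ?thesis
    by simp
qed

lemma shift_invariant_poly_eq:
  fixes g :: "'a::comm_ring_1 poly"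
  assumes "prime p" "CHAR('a) = p" "pcompose g [:1, 1:] = g" "degree g < 2 * p"
  shows "g = smult (coeff g p) ([:0, 1:] ^ p - [:0, 1:]) + [:poly g 0:]"
proof -
  have p2: "p \<ge> 2"
    using assms(1) prime_ge_2_nat by blast
  define h where "h = g - smult (coeff g p) ([:0, 1:] ^ p - [:0, 1:])"
  have "pcompose h [:1, 1:] = h"
    using assms(3) shift_invariant_X_power_minus_X[OF assms(1,2)]
    by (simp add: h_def pcompose_diff pcompose_smult)
  then obtain k where k: "degree h = p * k"
    using shift_invariant_dvd_degree[OF assms(1,2)] by blast
  have "degree h < p * 2"
    using assms(4) p2 degree_X_power_minus_X[OF p2, where 'a='a] unfolding h_def
    by (intro le_less_trans[OF degree_diff_le_max]) (auto intro: le_less_trans[OF degree_smult_le])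
  with k have "k < 2"
    by simp
  moreover have "lead_coeff h = 0" if "k = 1"
    using that k p2 coeff_X_power_minus_X[of p p, where 'a='a] by (simp add: h_def)
  ultimately have "degree h = 0"
    using k by (cases k) (auto simp: less_Suc_eq)
  then have "h = [:poly h 0:]"
    by (simp add: degree_0_id poly_0_coeff_0)
  also have "poly h 0 = poly g 0"
    using p2 by (simp add: h_def power_0_left)
  finally show ?thesis
    by (simp add: h_def algebra_simps)
qed

lemma prod_linear_shifts_CHAR:
  assumes "prime p" "CHAR('a::comm_ring_1) = p"
  shows "(\<Prod>k<p. [:of_nat k, 1:]) = ([:0, 1:] ^ p - [:0, 1:] :: 'a poly)"
proof -
  define P where "P = (\<Prod>k<p. [:of_nat k, 1:] :: 'a poly)"
  have p2: "p \<ge> 2"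
    using assms(1) prime_ge_2_nat by blast
  txt \<open>z \<cdot> P(z+1) = \<Prod>k\<le>p (z+k) = P(z) \<cdot> (z+p), and z + p = z.\<close>
  have "[:0, 1:] * pcompose P [:1, 1:] = [:0, 1:] * (\<Prod>k<p. [:of_nat (Suc k), 1:])"
    by (simp add: P_def pcompose_prod pcompose_pCons add.commute)
  also have "\<dots> = (\<Prod>k<Suc p. [:of_nat k, 1:])"
    by (simp only: prod.lessThan_Suc_shift) simp
  also have "\<dots> = [:0, 1:] * P"
    using of_nat_eq_0_CHAR[OF assms(2)] by (simp add: P_def mult.commute)
  finally have inv: "pcompose P [:1, 1:] = P"
    by simp
  have P_lead: "lead_coeff P = 1" and P_deg: "degree P = p"
    using monic_prod[of "{..<p}" "\<lambda>k. [:of_nat k, 1 :: 'a:]"] by (auto simp: P_def)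
  have "P = smult (coeff P p) ([:0, 1:] ^ p - [:0, 1:]) + [:poly P 0:]"
    using p2 P_deg by (intro shift_invariant_poly_eq[OF assms inv]) simp
  also have "coeff P p = 1"
    using P_lead P_deg by simp
  also have "poly P 0 = 0"
    using p2 by (simp add: P_def poly_prod) (intro prod_zero bexI[of _ 0], simp_all)
  finally show ?thesis
    by (simp add: P_def)
qed

lemma sum_pcompose_shifts_CHAR:
  fixes G :: "'a::comm_ring_1 poly"
  assumes "prime p" "CHAR('a) = p" "degree G < 2 * p"
  defines "S \<equiv> \<Sum>r<p. pcompose G [:of_nat r, 1:]"
  shows "S = smult (- coeff G (2 * p - 1)) ([:0, 1:] ^ p - [:0, 1:]) + [:poly S 0:]"
proof -
  have p2: "p \<ge> 2"
    using assms(1) prime_ge_2_nat by blast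
  have "pcompose S [:1, 1:] = (\<Sum>r<p. pcompose G [:of_nat (Suc r), 1:])"
    unfolding S_def pcompose_sum
    by (intro sum.cong) (simp_all flip: pcompose_assoc add: pcompose_pCons add.commute)
  also have "\<dots> = S"
    using sum.lessThan_Suc_shift[of "\<lambda>r. pcompose G [:of_nat r, 1:]" p]
    by (simp add: S_def of_nat_eq_0_CHAR[OF assms(2)] add.commute)
  finally have "pcompose S [:1, 1:] = S" .
  moreover have "degree S < 2 * p"
  proof -
    have "degree (pcompose G [:of_nat r, 1:]) \<le> 2 * p - 1" for r
      using degree_pcompose_le[of G "[:of_nat r, 1 :: 'a:]"] assms(3) by simp
    then have "degree S \<le> 2 * p - 1"
      unfolding S_def by (intro degree_sum_le) auto
    then show ?thesis
      using p2 by simp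
  qed
  ultimately have S_eq: "S = smult (coeff S p) ([:0, 1:] ^ p - [:0, 1:]) + [:poly S 0:]"
    by (rule shift_invariant_poly_eq[OF assms(1,2)])
  txt \<open>The coefficient of z^p is \<Sum>i (i choose p) g_i \<Sum>r<p r^(i-p), and only i = 2p - 1 survives.\<close>
  define f where "f i = coeff G i * of_nat (i choose p) * (\<Sum>r<p. (of_nat r :: 'a) ^ (i - p))" for i
  have "coeff S p = (\<Sum>r<p. \<Sum>i\<le>2 * p - 1. coeff G i * of_nat (i choose p) * of_nat r ^ (i - p))"
    unfolding S_def coeff_sum using assms(3)
    by (intro sum.cong refl coeff_pcompose_shift) simp
  also have "\<dots> = (\<Sum>i\<le>Suc (2 * p - 2). f i)"
    using p2 by (subst sum.swap) (simp add: f_def sum_distrib_left Suc_diff_Suc numeral_2_eq_2)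
  also have "\<dots> = f (2 * p - 1)"
  proof -
    have "f i = 0" if "i \<le> 2 * p - 2" for i
    proof (cases "i < p")
      case False
      with that p2 have "i - p + 1 < p"
        by linarith
      then show ?thesis
        by (simp add: f_def sum_of_nat_power_eq_0_CHAR[OF assms(1,2)])
    qed (simp add: f_def binomial_eq_0)
    then show ?thesis
      using p2 by (simp only: sum.atMost_Suc) (simp add: Suc_diff_Suc numeral_2_eq_2)
  qed
  also have "\<dots> = - coeff G (2 * p - 1)"
    using p2 of_nat_choose_double_pred_CHAR[OF assms(1,2)] sum_of_nat_power_pred_CHAR[OF assms(1,2)]
    by (simp add: f_def numeral_2_eq_2)
  finally show ?thesis
    using S_eq by simp
qed

section \<open>Products of matrices\<close>

lemma matprod_down_cong:
  "(\<And>k. k < n \<Longrightarrow> f k = g k) \<Longrightarrow> matprod_down f n = matprod_down g n"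
  by (induction n) auto

lemma matprod_down_const: "matprod_down (\<lambda>_. A) n = matpow A n"
  by (induction n) simp_all

lemma matprod_down_Suc_shift:
  "matprod_down f (Suc n) = matprod_down (\<lambda>k. f (Suc k)) n ** (f 0 :: 'a::semiring_1^'n^'n)"
  by (induction n arbitrary: f) (simp_all add: matrix_mul_assoc)

lemma trace_matprod_down_rotate_1:
  fixes g :: "nat \<Rightarrow> 'a::comm_semiring_1^'n^'n"
  shows "trace (matprod_down (\<lambda>k. g (Suc k mod n)) n) = trace (matprod_down g n)"
proof (cases n)
  case (Suc m)
  have "matprod_down (\<lambda>k. g (Suc k mod n)) m = matprod_down (\<lambda>k. g (Suc k)) m"
    using Suc by (intro matprod_down_cong) simp
  then have "matprod_down (\<lambda>k. g (Suc k mod n)) n = g 0 ** matprod_down (\<lambda>k. g (Suc k)) m"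
    using Suc by simp
  moreover have "matprod_down g n = matprod_down (\<lambda>k. g (Suc k)) m ** g 0"
    using Suc by (simp only: matprod_down_Suc_shift)
  ultimately show ?thesis
    by (metis trace_mul_sym)
qed simp

lemma trace_matprod_down_rotate:
  fixes f :: "nat \<Rightarrow> 'a::comm_semiring_1^'n^'n"
  shows "trace (matprod_down (\<lambda>k. f ((k + r) mod n)) n) = trace (matprod_down f n)"
proof (induction r)
  case 0
  have "matprod_down (\<lambda>k. f ((k + 0) mod n)) n = matprod_down f n"
    by (rule matprod_down_cong) simp
  then show ?case
    by (simp only:)
next
  case (Suc r)
  have "(\<lambda>k. f ((k + Suc r) mod n)) = (\<lambda>k. f ((Suc k mod n + r) mod n))"
    by (simp only: mod_add_left_eq add_Suc add_Suc_right)
  then show ?case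
    using trace_matprod_down_rotate_1[of "\<lambda>j. f ((j + r) mod n)" n] Suc.IH by (simp only:)
qed

lemma matrix_add_rdistrib: "((A::'a::semiring_1^'n^'m) + B) ** C = A ** C + B ** C"
  by (vector matrix_matrix_mult_def sum.distrib[symmetric] field_simps)

lemma matrix_mult_sum_left:
  "(\<Sum>i\<in>I. A i) ** (B :: 'a::semiring_1^'p^'n) = (\<Sum>i\<in>I. A i ** B)"
  by (induction I rule: infinite_finite_induct) (simp_all add: matrix_add_rdistrib)

lemma matrix_mult_sum_right:
  "(B :: 'a::semiring_1^'n^'m) ** (\<Sum>i\<in>I. A i) = (\<Sum>i\<in>I. B ** A i)"
  by (induction I rule: infinite_finite_induct) (simp_all add: matrix_add_ldistrib)

lemma trace_sum: "trace (\<Sum>i\<in>I. A i) = (\<Sum>i\<in>I. trace (A i :: 'a::comm_semiring_1^'n^'n))"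
  by (simp add: trace_def sum.swap[of _ UNIV I])

lemma matprod_down_sum_PiE:
  fixes F :: "nat \<Rightarrow> 'b \<Rightarrow> 'a::comm_semiring_1^'n^'n"
  assumes "finite I"
  shows "matprod_down (\<lambda>k. \<Sum>i\<in>I. F k i) n
    = (\<Sum>e\<in>{..<n} \<rightarrow>\<^sub>E I. matprod_down (\<lambda>k. F k (e k)) n)"
proof (induction n)
  case (Suc n)
  have "matprod_down (\<lambda>k. \<Sum>i\<in>I. F k i) (Suc n)
      = (\<Sum>i\<in>I. \<Sum>e\<in>{..<n} \<rightarrow>\<^sub>E I. F n i ** matprod_down (\<lambda>k. F k (e k)) n)"
    by (simp add: Suc.IH matrix_mult_sum_left matrix_mult_sum_right) (rule sum.swap)
  also have "\<dots> = (\<Sum>(i, e)\<in>I \<times> ({..<n} \<rightarrow>\<^sub>E I). F n i ** matprod_down (\<lambda>k. F k (e k)) n)"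
    by (rule sum.cartesian_product)
  also have "\<dots> = (\<Sum>e\<in>{..<Suc n} \<rightarrow>\<^sub>E I. matprod_down (\<lambda>k. F k (e k)) (Suc n))"
  proof (rule sum.reindex_bij_witness[of _ "\<lambda>e. (e n, e(n := undefined))" "\<lambda>(i, e). e(n := i)"])
    fix ie assume "ie \<in> I \<times> ({..<n} \<rightarrow>\<^sub>E I)"
    then obtain i e where ie: "ie = (i, e)" "e \<in> {..<n} \<rightarrow>\<^sub>E I"
      by auto
    have "matprod_down (\<lambda>k. F k ((e(n := i)) k)) n = matprod_down (\<lambda>k. F k (e k)) n"
      by (rule matprod_down_cong) simp
    with ie show "matprod_down (\<lambda>k. F k (((\<lambda>(i, e). e(n := i)) ie) k)) (Suc n)
        = (case ie of (i, e) \<Rightarrow> F n i ** matprod_down (\<lambda>k. F k (e k)) n)"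
      by simp
  qed (auto simp: PiE_def extensional_def Pi_def less_Suc_eq)
  finally show ?case .
qed simp

lemma map_matrix_smult_mult:
  fixes A :: "'a::comm_semiring_1^'n^'m" and B :: "'a^'p^'n"
  shows "map_matrix (\<lambda>x. smult x c) A ** map_matrix (\<lambda>x. smult x d) B
    = map_matrix (\<lambda>x. smult x (c * d)) (A ** B)"
  by (simp add: matrix_matrix_mult_def vec_eq_iff smult_sum mult_ac)

lemma matprod_down_map_matrix_smult:
  "matprod_down (\<lambda>k. map_matrix (\<lambda>x. smult x (c k)) (M k :: 'a::comm_semiring_1^'n^'n)) n
    = map_matrix (\<lambda>x. smult x (\<Prod>k<n. c k)) (matprod_down M n)"
proof (induction n)
  case 0
  show ?case
    by (simp add: mat_def vec_eq_iff)
qed (simp add: map_matrix_smult_mult mult.commute)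

lemma trace_map_matrix_smult:
  "trace (map_matrix (\<lambda>x. smult x c) (A :: 'a::comm_semiring_1^'n^'n)) = smult (trace A) c"
  by (simp add: trace_def smult_sum)

lemma map_matrix_poly_mult:
  fixes A :: "'a::comm_semiring_1 poly^'n^'m" and B :: "'a poly^'p^'n"
  shows "map_matrix (\<lambda>q. poly q x) (A ** B) = map_matrix (\<lambda>q. poly q x) A ** map_matrix (\<lambda>q. poly q x) B"
  by (simp add: matrix_matrix_mult_def vec_eq_iff poly_sum)

lemma matprod_down_map_matrix_poly:
  "map_matrix (\<lambda>q. poly q x) (matprod_down M n)
    = matprod_down (\<lambda>k. map_matrix (\<lambda>q. poly q x) (M k :: 'a::comm_semiring_1 poly^'n^'n)) n"
proof (induction n)
  case 0
  show ?case
    by (simp add: mat_def vec_eq_iff)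
qed (simp add: map_matrix_poly_mult)

lemma poly_trace: "poly (trace A) x = trace (map_matrix (\<lambda>q. poly q x) (A :: 'a::comm_semiring_1 poly^'n^'n))"
  by (simp add: trace_def poly_sum)

section \<open>Words and their rotations\<close>

lemma bij_betw_add_mod:
  fixes n r :: nat
  assumes "n > 0"
  shows "bij_betw (\<lambda>k. (k + r) mod n) {..<n} {..<n}"
proof -
  have inj: "inj_on (\<lambda>k. (k + r) mod n) {..<n}"
  proof (rule inj_onI)
    fix a b assume ab: "a \<in> {..<n}" "b \<in> {..<n}" and "(a + r) mod n = (b + r) mod n"
    then have "[a = b] (mod n)"
      using cong_add_rcancel_nat[of a r b n] by (simp add: cong_def)
    with ab show "a = b"
      by (simp add: cong_def)
  qed
  moreover have "(\<lambda>k. (k + r) mod n) ` {..<n} \<subseteq> {..<n}"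
    using assms by auto
  ultimately show ?thesis
    by (simp add: bij_betw_def endo_inj_surj)
qed

definition rotate_word :: "nat \<Rightarrow> nat \<Rightarrow> (nat \<Rightarrow> 'b) \<Rightarrow> nat \<Rightarrow> 'b" where
  "rotate_word n r e = restrict (\<lambda>k. e ((k + r) mod n)) {..<n}"

lemma rotate_word_PiE:
  assumes "n > 0" "e \<in> {..<n} \<rightarrow>\<^sub>E A"
  shows "rotate_word n r e \<in> {..<n} \<rightarrow>\<^sub>E A"
  unfolding rotate_word_def restrict_PiE_iff
  using assms PiE_mem[OF assms(2)] by simp

lemma rotate_word_rotate_word:
  "n > 0 \<Longrightarrow> rotate_word n r (rotate_word n s e) = rotate_word n (s + r) e"
  unfolding rotate_word_def
  by (intro restrict_ext) (simp add: mod_add_left_eq mod_add_right_eq add.commute add.left_commute)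

lemma rotate_word_self: "e \<in> {..<n} \<rightarrow>\<^sub>E A \<Longrightarrow> rotate_word n n e = e"
  by (auto simp: rotate_word_def PiE_def extensional_def)

lemma rotate_constant_word:
  "n > 0 \<Longrightarrow> rotate_word n r (restrict (\<lambda>_. a) {..<n}) = restrict (\<lambda>_. a) {..<n}"
  unfolding rotate_word_def by (intro restrict_ext) simp

lemma card_rotate_word:
  assumes "n > 0"
  shows "card {k\<in>{..<n}. P (rotate_word n r e k)} = card {k\<in>{..<n}. P (e k)}"
proof -
  let ?f = "\<lambda>k. (k + r) mod n"
  have "?f ` {k\<in>{..<n}. P (e (?f k))} = {j\<in>?f ` {..<n}. P (e j)}"
    by auto
  also have "?f ` {..<n} = {..<n}"
    using bij_betw_add_mod[OF assms] by (simp add: bij_betw_def)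
  finally have "bij_betw ?f {k\<in>{..<n}. P (e (?f k))} {k\<in>{..<n}. P (e k)}"
    by (intro bij_betw_subset[OF bij_betw_add_mod[OF assms]]) auto
  then have "card {k\<in>{..<n}. P (e (?f k))} = card {k\<in>{..<n}. P (e k)}"
    by (rule bij_betw_same_card)
  moreover have "{k\<in>{..<n}. P (rotate_word n r e k)} = {k\<in>{..<n}. P (e (?f k))}"
    by (auto simp: rotate_word_def)
  ultimately show ?thesis
    by simp
qed

lemma image_rotate_word:
  assumes "n > 0"
  shows "rotate_word n r e ` {..<n} = e ` {..<n}"
proof -
  have "rotate_word n r e ` {..<n} = e ` (\<lambda>k. (k + r) mod n) ` {..<n}"
    by (auto simp: rotate_word_def image_image)
  also have "(\<lambda>k. (k + r) mod n) ` {..<n} = {..<n}"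
    using bij_betw_add_mod[OF assms] by (simp add: bij_betw_def)
  finally show ?thesis .
qed

definition nonconstant_words :: "nat \<Rightarrow> 'b set \<Rightarrow> (nat \<Rightarrow> 'b) set" where
  "nonconstant_words n A = ({..<n} \<rightarrow>\<^sub>E A) - (\<lambda>a. restrict (\<lambda>_. a) {..<n}) ` A"

lemma rotate_nonconstant_word:
  assumes "n > 0" "r \<le> n" "e \<in> nonconstant_words n A"
  shows "rotate_word n r e \<in> nonconstant_words n A"
proof -
  have e: "e \<in> {..<n} \<rightarrow>\<^sub>E A"
    using assms(3) by (simp add: nonconstant_words_def)
  have rotate_back: "rotate_word n (n - r) (rotate_word n r e) = e"
    using assms(2) rotate_word_self[OF e] by (simp add: rotate_word_rotate_word[OF assms(1)])
  have "rotate_word n r e \<noteq> restrict (\<lambda>_. a) {..<n}" if "a \<in> A" for a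
  proof
    assume "rotate_word n r e = restrict (\<lambda>_. a) {..<n}"
    then have "e = restrict (\<lambda>_. a) {..<n}"
      using rotate_back rotate_constant_word[OF assms(1)] by metis
    with assms(3) that show False
      by (simp add: nonconstant_words_def)
  qed
  with rotate_word_PiE[OF assms(1) e] show ?thesis
    by (auto simp: nonconstant_words_def)
qed

lemma bij_betw_rotate_nonconstant_words:
  assumes "n > 0" "r \<le> n"
  shows "bij_betw (rotate_word n r) (nonconstant_words n A) (nonconstant_words n A)"
proof (rule bij_betw_byWitness[where f' = "rotate_word n (n - r)"])
  have "rotate_word n (n - r) (rotate_word n r e) = e" "rotate_word n r (rotate_word n (n - r) e) = e"
    if "e \<in> nonconstant_words n A" for e
    using assms that rotate_word_self[of e n A]
    by (simp_all add: nonconstant_words_def rotate_word_rotate_word)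
  then show "\<forall>e\<in>nonconstant_words n A. rotate_word n (n - r) (rotate_word n r e) = e"
    and "\<forall>e\<in>nonconstant_words n A. rotate_word n r (rotate_word n (n - r) e) = e"
    by blast+
  show "rotate_word n r ` nonconstant_words n A \<subseteq> nonconstant_words n A"
    and "rotate_word n (n - r) ` nonconstant_words n A \<subseteq> nonconstant_words n A"
    using rotate_nonconstant_word[OF assms] rotate_nonconstant_word[OF assms(1), of "n - r"] by auto
qed

text \<open>Weights summing to one over every rotation orbit of a nonconstant word, so that no orbit
  representatives have to be chosen: a word gets weight 1/c if it starts with its least letter,
  which occurs c times in it; for prime n, of_nat c ^ (n - 2) is that inverse.\<close>

definition orbit_weight :: "nat \<Rightarrow> (nat \<Rightarrow> 'b::linorder) \<Rightarrow> 'a::comm_ring_1" where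
  "orbit_weight n e =
    (if e 0 = Min (e ` {..<n}) then of_nat (card {k\<in>{..<n}. e k = Min (e ` {..<n})}) ^ (n - 2) else 0)"

lemma sum_orbit_weight_rotate_word:
  assumes "prime p" "CHAR('a::comm_ring_1) = p" "e \<in> nonconstant_words p A"
  shows "(\<Sum>r<p. orbit_weight p (rotate_word p r e) :: 'a) = 1"
proof -
  have p: "p > 0"
    using assms(1) prime_gt_0_nat by blast
  define m where "m = Min (e ` {..<p})"
  define K where "K = {k\<in>{..<p}. e k = m}"
  have "m \<in> e ` {..<p}"
    unfolding m_def using p by (intro Min_in) auto
  then have "K \<noteq> {}"
    by (auto simp: K_def)
  then have K_pos: "card K > 0"
    by (simp add: K_def card_gt_0_iff)
  have e: "e \<in> {..<p} \<rightarrow>\<^sub>E A"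
    using assms(3) by (simp add: nonconstant_words_def)
  have "K \<noteq> {..<p}"
  proof
    assume "K = {..<p}"
    then have "e k = m" if "k < p" for k
      using that unfolding K_def by blast
    then have "e = restrict (\<lambda>_. m) {..<p}"
      using PiE_arb[OF e] by (intro ext) simp
    moreover have "m \<in> A"
      using \<open>m \<in> e ` {..<p}\<close> assms(3) by (auto simp: nonconstant_words_def)
    ultimately show False
      using assms(3) by (simp add: nonconstant_words_def)
  qed
  moreover have "K \<subseteq> {..<p}"
    by (auto simp: K_def)
  ultimately have "card K < p"
    using psubset_card_mono[of "{..<p}" K] by auto
  have weight_rotate: "orbit_weight p (rotate_word p r e)
      = (if e r = m then of_nat (card K) ^ (p - 2) else 0 :: 'a)" if "r < p" for r
    using that p card_rotate_word[OF p, of "\<lambda>x. x = m" r e]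
    by (simp add: orbit_weight_def image_rotate_word m_def K_def) (simp add: rotate_word_def)
  have "(\<Sum>r<p. orbit_weight p (rotate_word p r e) :: 'a)
      = (\<Sum>r<p. if e r = m then of_nat (card K) ^ (p - 2) else 0)"
    by (intro sum.cong) (simp_all add: weight_rotate)
  also have "\<dots> = (\<Sum>r\<in>K. of_nat (card K) ^ (p - 2))"
    unfolding K_def by (rule sum.inter_filter[symmetric]) simp
  also have "\<dots> = of_nat (card K) * of_nat (card K) ^ (p - 2)"
    by simp
  also have "\<dots> = of_nat (card K) ^ (p - 1)"
  proof -
    have "p - 1 = Suc (p - 2)"
      using prime_ge_2_nat[OF assms(1)] by simp
    then show ?thesis
      by (simp only: power_Suc)
  qed
  also have "\<dots> = 1"
    using K_pos \<open>card K < p\<close> by (intro of_nat_power_pred_CHAR[OF assms(1,2)]) (simp add: nat_dvd_not_less)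
  finally show ?thesis .
qed

lemma sum_nonconstant_words_orbits:
  fixes F :: "(nat \<Rightarrow> 'b::linorder) \<Rightarrow> 'a::comm_ring_1 poly"
  assumes "prime p" "CHAR('a) = p"
    and F_rotate: "\<And>e r. e \<in> nonconstant_words p A \<Longrightarrow> r < p
      \<Longrightarrow> pcompose (F (rotate_word p r e)) [:of_nat r, 1:] = F e"
  shows "(\<Sum>e\<in>nonconstant_words p A. F e)
    = (\<Sum>r<p. pcompose (\<Sum>e\<in>nonconstant_words p A. smult (orbit_weight p e) (F e)) [:of_nat r, 1:])"
proof -
  let ?N = "nonconstant_words p A"
  have p: "p > 0"
    using assms(1) prime_gt_0_nat by blast
  have "(\<Sum>e\<in>?N. F e) = (\<Sum>e\<in>?N. \<Sum>r<p. smult (orbit_weight p (rotate_word p r e)) (F e))"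
    by (intro sum.cong refl) (simp add: sum_orbit_weight_rotate_word[OF assms(1,2)] flip: smult_sum)
  also have "\<dots> = (\<Sum>r<p. \<Sum>e\<in>?N. smult (orbit_weight p (rotate_word p r e))
      (pcompose (F (rotate_word p r e)) [:of_nat r, 1:]))"
    by (subst sum.swap) (simp add: F_rotate)
  also have "\<dots> = (\<Sum>r<p. \<Sum>e\<in>?N. smult (orbit_weight p e) (pcompose (F e) [:of_nat r, 1:]))"
  proof (rule sum.cong[OF refl])
    fix r assume "r \<in> {..<p}"
    then show "(\<Sum>e\<in>?N. smult (orbit_weight p (rotate_word p r e))
        (pcompose (F (rotate_word p r e)) [:of_nat r, 1:]))
      = (\<Sum>e\<in>?N. smult (orbit_weight p e) (pcompose (F e) [:of_nat r, 1:]))"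
      using bij_betw_rotate_nonconstant_words[OF p, of r A]
      by (intro sum.reindex_bij_betw[where g = "\<lambda>e. smult (orbit_weight p e) (pcompose (F e) [:of_nat r, 1:])"])
        simp
  qed
  finally show ?thesis
    by (simp add: pcompose_sum pcompose_smult)
qed

section \<open>The trace as a sum over words\<close>

lemma sum_PiE_split_constant_words:
  assumes "n > 0" "finite A"
  shows "(\<Sum>e\<in>{..<n} \<rightarrow>\<^sub>E A. f e)
    = (\<Sum>e\<in>nonconstant_words n A. f e) + (\<Sum>a\<in>A. f (restrict (\<lambda>_. a) {..<n}))"
proof -
  have "inj_on (\<lambda>a. restrict (\<lambda>_. a) {..<n}) A"
    using assms(1) by (intro inj_onI) (metis lessThan_iff restrict_apply')
  moreover have "(\<lambda>a. restrict (\<lambda>_. a) {..<n}) ` A \<subseteq> {..<n} \<rightarrow>\<^sub>E A"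
    by (simp add: image_subset_iff)
  ultimately show ?thesis
    using assms(2) by (simp add: nonconstant_words_def sum.subset_diff[of _ "{..<n} \<rightarrow>\<^sub>E A"]
        finite_PiE sum.reindex)
qed

definition word_poly :: "nat \<Rightarrow> (nat \<Rightarrow> nat) \<Rightarrow> 'a::comm_semiring_1 poly" where
  "word_poly n e = (\<Prod>k<n. [:of_nat k, 1:] ^ e k)"

definition word_trace :: "('a::semiring_1^'n^'n) list \<Rightarrow> nat \<Rightarrow> (nat \<Rightarrow> nat) \<Rightarrow> 'a" where
  "word_trace Bs n e = trace (matprod_down (\<lambda>k. Bs ! e k) n)"

lemma Bpoly_eq_sum:
  "Bpoly B0 B1 B2 s = (\<Sum>i\<in>{0, 1, 2}. map_matrix (\<lambda>x. smult x (s ^ i)) ([B0, B1, B2] ! i))"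
  by (simp add: Bpoly_def vec_eq_iff mult.commute add.assoc)

lemma map_matrix_poly_Bpoly:
  "map_matrix (\<lambda>q. poly q c) (Bpoly B0 B1 B2 s) = Bval B0 B1 B2 (poly s c)"
  by (simp add: Bpoly_def Bval_def vec_eq_iff)

lemma trace_matprod_Bpoly:
  fixes B0 B1 B2 :: "'a::comm_ring_1^'n^'n"
  shows "trace (matprod_down (\<lambda>k. Bpoly B0 B1 B2 ([:0, 1:] + of_nat k)) n)
    = (\<Sum>e\<in>{..<n} \<rightarrow>\<^sub>E {0, 1, 2}. smult (word_trace [B0, B1, B2] n e) (word_poly n e))"
proof -
  have "[:0, 1:] + of_nat k = [:of_nat k, 1 :: 'a:]" for k
    by (simp add: of_nat_poly)
  then show ?thesis
    by (simp only: Bpoly_eq_sum matprod_down_sum_PiE finite.emptyI finite_insert trace_sum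
        matprod_down_map_matrix_smult trace_map_matrix_smult word_trace_def word_poly_def)
qed

lemma word_trace_rotate_word:
  "word_trace (Bs :: ('a::comm_semiring_1^'n^'n) list) n (rotate_word n r e) = word_trace Bs n e"
proof -
  have "matprod_down (\<lambda>k. Bs ! rotate_word n r e k) n = matprod_down (\<lambda>k. Bs ! e ((k + r) mod n)) n"
    by (rule matprod_down_cong) (simp add: rotate_word_def)
  then show ?thesis
    using trace_matprod_down_rotate[of "\<lambda>j. Bs ! e j" r n] by (simp add: word_trace_def)
qed

lemma word_trace_constant_word: "word_trace Bs n (restrict (\<lambda>_. a) {..<n}) = trace (matpow (Bs ! a) n)"
proof -
  have "matprod_down (\<lambda>k. Bs ! restrict (\<lambda>_. a) {..<n} k) n = matprod_down (\<lambda>_. Bs ! a) n"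
    by (rule matprod_down_cong) simp
  then show ?thesis
    by (simp add: word_trace_def matprod_down_const)
qed

lemma pcompose_word_poly_rotate_word:
  assumes "prime p" "CHAR('a::comm_ring_1) = p"
  shows "pcompose (word_poly p (rotate_word p r e)) [:of_nat r, 1:] = (word_poly p e :: 'a poly)"
proof -
  have p: "p > 0"
    using assms(1) prime_gt_0_nat by blast
  have shift: "pcompose [:of_nat k, 1:] [:of_nat r, 1:] = ([:of_nat ((k + r) mod p), 1:] :: 'a poly)" for k
    using of_nat_mod_CHAR[OF assms(2), of "k + r"] by (simp add: pcompose_pCons)
  have "pcompose (word_poly p (rotate_word p r e)) [:of_nat r, 1:]
      = (\<Prod>k<p. [:of_nat ((k + r) mod p), 1:] ^ e ((k + r) mod p) :: 'a poly)"
    unfolding word_poly_def pcompose_prod pcompose_power shift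
    by (intro prod.cong) (simp_all add: rotate_word_def)
  also have "\<dots> = word_poly p e"
    unfolding word_poly_def
    by (rule prod.reindex_bij_betw[OF bij_betw_add_mod[OF p], where g = "\<lambda>j. [:of_nat j, 1:] ^ e j"])
  finally show ?thesis .
qed

lemma word_poly_constant_word:
  assumes "prime p" "CHAR('a::comm_ring_1) = p"
  shows "word_poly p (restrict (\<lambda>_. a) {..<p}) = (([:0, 1:] ^ p - [:0, 1:]) ^ a :: 'a poly)"
proof -
  have "word_poly p (restrict (\<lambda>_. a) {..<p}) = (\<Prod>k<p. [:of_nat k, 1 :: 'a:]) ^ a"
    unfolding word_poly_def prod_power_distrib by (intro prod.cong) simp_all
  then show ?thesis
    by (simp add: prod_linear_shifts_CHAR[OF assms])
qed

lemma
  shows lead_coeff_word_poly: "lead_coeff (word_poly n e :: 'a::comm_semiring_1 poly) = 1"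
    and degree_word_poly: "degree (word_poly n e :: 'a poly) = (\<Sum>k<n. e k)"
  using monic_prod[of "{..<n}" "\<lambda>k. [:of_nat k, 1 :: 'a:] ^ e k"]
  by (auto simp: word_poly_def degree_linear_power coeff_linear_power)

lemma sum_nonconstant_word_le:
  assumes "e \<in> nonconstant_words n {0, 1, 2 :: nat}"
  shows "(\<Sum>k<n. e k) \<le> 2 * n - 1"
proof -
  have e: "e \<in> {..<n} \<rightarrow>\<^sub>E {0, 1, 2}"
    using assms by (simp add: nonconstant_words_def)
  have "e \<noteq> restrict (\<lambda>_. 2) {..<n}"
    using assms by (simp add: nonconstant_words_def)
  then obtain k where k: "k < n" "e k \<noteq> 2"
    using PiE_arb[OF e] by (auto simp: fun_eq_iff split: if_splits)
  have le2: "e j \<le> 2" if "j < n" for j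
    using PiE_mem[OF e, of j] that by auto
  with k have "e k < 2"
    by (simp add: le_neq_implies_less)
  with k le2 have "(\<Sum>k<n. e k) < (\<Sum>k<n. 2)"
    by (intro sum_strict_mono_ex1 bexI[of _ k]) auto
  then show ?thesis
    by simp
qed

lemma top_weight_word_eq:
  assumes "n > 0" "e \<in> {..<n} \<rightarrow>\<^sub>E {0, 1, 2 :: nat}" "(\<Sum>k<n. e k) = 2 * n - 1" "\<And>k. k < n \<Longrightarrow> e 0 \<le> e k"
  shows "e = restrict (\<lambda>k. if k = 0 then 1 else 2) {..<n}"
proof -
  have le2: "e k \<le> 2" if "k < n" for k
    using PiE_mem[OF assms(2), of k] that by auto
  obtain m where n: "n = Suc m"
    using assms(1) gr0_implies_Suc by blast
  define S where "S = (\<Sum>k<m. e (Suc k))"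
  have sum_eq: "e 0 + S = 2 * m + 1"
    using assms(3) unfolding n S_def by (simp only: sum.lessThan_Suc_shift) simp
  have S_le: "S \<le> 2 * m"
    using sum_mono[of "{..<m}" "\<lambda>k. e (Suc k)" "\<lambda>_. 2"] le2 by (simp add: S_def n)
  have "e 0 \<noteq> 2"
  proof
    assume "e 0 = 2"
    then have "S = (\<Sum>k<m. 2)"
      unfolding S_def using assms(4) le2 by (intro sum.cong) (auto simp: n intro: antisym)
    with sum_eq \<open>e 0 = 2\<close> show False
      by simp
  qed
  with sum_eq S_le le2[of 0] have e0: "e 0 = 1"
    by (simp add: n)
  have "e (Suc k) = 2" if "k < m" for k
  proof (rule ccontr)
    assume "e (Suc k) \<noteq> 2"
    with that le2[of "Suc k"] have "e (Suc k) < 2"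
      by (simp add: n)
    with that le2 have "S < (\<Sum>k<m. 2)"
      unfolding S_def by (intro sum_strict_mono_ex1 bexI[of _ k]) (auto simp: n)
    with sum_eq e0 show False
      by simp
  qed
  with e0 PiE_arb[OF assms(2)] show ?thesis
    by (intro ext) (auto simp: n less_Suc_eq_0_disj)
qed

definition weighted_orbit_poly :: "('a::comm_ring_1^'n^'n) list \<Rightarrow> nat \<Rightarrow> 'a poly" where
  "weighted_orbit_poly Bs p = (\<Sum>e\<in>nonconstant_words p {0, 1, 2 :: nat}.
     smult (orbit_weight p e) (smult (word_trace Bs p e) (word_poly p e)))"

lemma degree_weighted_orbit_poly:
  assumes "p > 0"
  shows "degree (weighted_orbit_poly Bs p) < 2 * p"
proof -
  have "degree (weighted_orbit_poly Bs p) \<le> 2 * p - 1"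
    unfolding weighted_orbit_poly_def
  proof (intro degree_sum_le)
    fix e assume "e \<in> nonconstant_words p {0, 1, 2 :: nat}"
    then show "degree (smult (orbit_weight p e) (smult (word_trace Bs p e) (word_poly p e))) \<le> 2 * p - 1"
      using sum_nonconstant_word_le degree_word_poly[of p e]
      by (metis (no_types) degree_smult_le order.trans)
  qed (simp add: nonconstant_words_def finite_PiE)
  with assms show ?thesis
    by simp
qed

lemma coeff_weighted_orbit_poly:
  fixes B0 B1 B2 :: "'a::comm_ring_1^'n^'n"
  assumes "prime p" "CHAR('a) = p"
  shows "coeff (weighted_orbit_poly [B0, B1, B2] p) (2 * p - 1) = trace (matpow B2 (p - 1) ** B1)"
proof -
  have p2: "p \<ge> 2"
    using assms(1) prime_ge_2_nat by blast
  then obtain m where m: "p = Suc m"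
    by (cases p) auto
  define t where "t = restrict (\<lambda>k. if k = 0 then 1 else 2 :: nat) {..<p}"
  let ?N = "nonconstant_words p {0, 1, 2 :: nat}"
  let ?c = "\<lambda>e. orbit_weight p e * word_trace [B0, B1, B2] p e * coeff (word_poly p e :: 'a poly) (2 * p - 1)"
  have t_N: "t \<in> ?N"
  proof -
    have "t \<noteq> restrict (\<lambda>_. a) {..<p}" for a
    proof
      assume "t = restrict (\<lambda>_. a) {..<p}"
      then have "t 0 = a" "t 1 = a"
        using p2 by simp_all
      with p2 show False
        by (simp add: t_def)
    qed
    then show ?thesis
      by (auto simp: nonconstant_words_def t_def)
  qed
  have sum_t: "(\<Sum>k<p. t k) = 2 * p - 1"
    unfolding m by (simp only: sum.lessThan_Suc_shift) (simp add: t_def m)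
  have vanish: "?c e = 0" if e: "e \<in> ?N" "e \<noteq> t" for e
  proof (cases "orbit_weight p e = (0::'a)")
    case False
    then have "e 0 = Min (e ` {..<p})"
      by (auto simp: orbit_weight_def split: if_splits)
    then have "e 0 \<le> e k" if "k < p" for k
      using that by simp
    then have "(\<Sum>k<p. e k) \<noteq> 2 * p - 1"
      using e top_weight_word_eq[of p e] p2 by (auto simp: nonconstant_words_def t_def)
    with sum_nonconstant_word_le[OF e(1)] have "degree (word_poly p e :: 'a poly) < 2 * p - 1"
      using degree_word_poly[of p e, where 'a='a] by simp
    then show ?thesis
      by (simp add: coeff_eq_0)
  qed simp
  have "orbit_weight p t = (1::'a)"
  proof -
    have "Min (t ` {..<p}) = 1"
      using p2 by (intro Min_eqI) (auto simp: t_def)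
    moreover have "{k\<in>{..<p}. t k = 1} = {0}"
      using p2 by (auto simp: t_def)
    ultimately show ?thesis
      using p2 by (simp add: orbit_weight_def t_def)
  qed
  moreover have "word_trace [B0, B1, B2] p t = trace (matpow B2 (p - 1) ** B1)"
  proof -
    have "matprod_down (\<lambda>k. [B0, B1, B2] ! t (Suc k)) m = matprod_down (\<lambda>_. B2) m"
      by (rule matprod_down_cong) (simp add: t_def m)
    then show ?thesis
      unfolding word_trace_def m matprod_down_Suc_shift by (simp add: matprod_down_const t_def m)
  qed
  moreover have "coeff (word_poly p t :: 'a poly) (2 * p - 1) = 1"
    using lead_coeff_word_poly[of p t, where 'a='a] degree_word_poly[of p t, where 'a='a] sum_t by simp
  ultimately have "?c t = trace (matpow B2 (p - 1) ** B1)"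
    by simp
  moreover have "coeff (weighted_orbit_poly [B0, B1, B2] p) (2 * p - 1) = (\<Sum>e\<in>?N. ?c e)"
    by (simp add: weighted_orbit_poly_def coeff_sum mult.assoc)
  moreover have "(\<Sum>e\<in>?N. ?c e) = (\<Sum>e\<in>{t}. ?c e)"
    using vanish t_N by (intro sum.mono_neutral_right) (auto simp: nonconstant_words_def finite_PiE)
  ultimately show ?thesis
    by simp
qed

lemma sum_nonconstant_words_Bpoly:
  fixes B0 B1 B2 :: "'a::comm_ring_1^'n^'n"
  assumes "prime p" "CHAR('a) = p"
  obtains c where "(\<Sum>e\<in>nonconstant_words p {0, 1, 2}. smult (word_trace [B0, B1, B2] p e) (word_poly p e))
    = smult (- trace (matpow B2 (p - 1) ** B1)) ([:0, 1:] ^ p - [:0, 1:]) + [:c:]"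
proof -
  have p: "p > 0"
    using assms(1) prime_gt_0_nat by blast
  have "(\<Sum>e\<in>nonconstant_words p {0, 1, 2}. smult (word_trace [B0, B1, B2] p e) (word_poly p e))
      = (\<Sum>r<p. pcompose (weighted_orbit_poly [B0, B1, B2] p) [:of_nat r, 1:])"
    unfolding weighted_orbit_poly_def
    by (rule sum_nonconstant_words_orbits[OF assms])
       (simp add: pcompose_smult word_trace_rotate_word pcompose_word_poly_rotate_word[OF assms])
  also have "\<dots> = smult (- trace (matpow B2 (p - 1) ** B1)) ([:0, 1:] ^ p - [:0, 1:])
      + [:poly (\<Sum>r<p. pcompose (weighted_orbit_poly [B0, B1, B2] p) [:of_nat r, 1:]) 0:]"
    using sum_pcompose_shifts_CHAR[OF assms degree_weighted_orbit_poly[OF p, of "[B0, B1, B2]"]]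
    unfolding coeff_weighted_orbit_poly[OF assms] .
  finally show thesis
    by (rule that)
qed

lemma sum_constant_words_Bpoly:
  fixes B0 B1 B2 :: "'a::comm_ring_1^'n^'n"
  assumes "prime p" "CHAR('a) = p"
  shows "(\<Sum>a\<in>{0, 1, 2}. smult (word_trace [B0, B1, B2] p (restrict (\<lambda>_. a) {..<p}))
      (word_poly p (restrict (\<lambda>_. a) {..<p})))
    = [:trace (matpow B0 p):] + smult (trace (matpow B1 p)) ([:0, 1:] ^ p - [:0, 1:])
      + smult (trace (matpow B2 p)) (([:0, 1:] ^ p - [:0, 1:]) ^ 2)"
  by (simp add: word_trace_constant_word word_poly_constant_word[OF assms])

lemma trace_matprod_Bpoly_eq:
  fixes B0 B1 B2 :: "'a::comm_ring_1^'n^'n"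
  assumes "prime p" "CHAR('a) = p"
  defines "w \<equiv> [:0, 1:] ^ p - [:0, 1:] :: 'a poly"
  obtains c where "trace (matprod_down (\<lambda>k. Bpoly B0 B1 B2 ([:0, 1:] + of_nat k)) p)
    = smult (trace (matpow B2 p)) (w ^ 2) - smult (trace (matpow B2 (p - 1) ** B1)) w
      + smult (trace (matpow B1 p)) w + [:c:]"
proof -
  have p: "p > 0"
    using assms(1) prime_gt_0_nat by blast
  obtain c where c: "(\<Sum>e\<in>nonconstant_words p {0, 1, 2}. smult (word_trace [B0, B1, B2] p e) (word_poly p e))
      = smult (- trace (matpow B2 (p - 1) ** B1)) w + [:c:]"
    using sum_nonconstant_words_Bpoly[OF assms(1,2)] unfolding w_def .
  have "trace (matprod_down (\<lambda>k. Bpoly B0 B1 B2 ([:0, 1:] + of_nat k)) p)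
      = (\<Sum>e\<in>nonconstant_words p {0, 1, 2}. smult (word_trace [B0, B1, B2] p e) (word_poly p e))
        + (\<Sum>a\<in>{0, 1, 2}. smult (word_trace [B0, B1, B2] p (restrict (\<lambda>_. a) {..<p}))
            (word_poly p (restrict (\<lambda>_. a) {..<p})))"
    unfolding trace_matprod_Bpoly by (rule sum_PiE_split_constant_words[OF p]) simp
  also have "\<dots> = smult (trace (matpow B2 p)) (w ^ 2) - smult (trace (matpow B2 (p - 1) ** B1)) w
      + smult (trace (matpow B1 p)) w + [:c + trace (matpow B0 p):]"
    unfolding c sum_constant_words_Bpoly[OF assms(1,2)] w_def by (simp add: algebra_simps)
  finally show thesis
    by (rule that)
qed

theorem lemma3p4:
  fixes B0 B1 B2 :: "'a::comm_ring_1^2^2"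
    and p :: nat
  assumes "prime p"
    and "CHAR('a) = p"
  defines "z \<equiv> [:0, 1:] :: 'a poly"
  shows "trace (matprod_down (\<lambda>k. Bpoly B0 B1 B2 (z + of_nat k)) p)
       = (z^p - z)^2 * [:trace (matpow B2 p):]
         - (z^p - z) * [:trace (matpow B2 (p - 1) ** B1):]
         + (z^p - z) * [:trace (matpow B1 p):]
         + [:trace (matprod_down (\<lambda>k. Bval B0 B1 B2 (of_nat k)) p):]"
proof -
  obtain c where T: "trace (matprod_down (\<lambda>k. Bpoly B0 B1 B2 (z + of_nat k)) p)
      = smult (trace (matpow B2 p)) ((z ^ p - z) ^ 2) - smult (trace (matpow B2 (p - 1) ** B1)) (z ^ p - z)
        + smult (trace (matpow B1 p)) (z ^ p - z) + [:c:]"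
    using trace_matprod_Bpoly_eq[OF assms(1,2)] unfolding z_def .
  have "poly (z ^ p - z) 0 = 0"
    using prime_gt_0_nat[OF assms(1)] by (simp add: z_def power_0_left)
  then have "c = poly (trace (matprod_down (\<lambda>k. Bpoly B0 B1 B2 (z + of_nat k)) p)) 0"
    unfolding T by simp
  also have "\<dots> = trace (matprod_down (\<lambda>k. Bval B0 B1 B2 (of_nat k)) p)"
    by (simp add: z_def poly_trace matprod_down_map_matrix_poly map_matrix_poly_Bpoly)
  finally show ?thesis
    unfolding T by (simp add: algebra_simps)
qed

end
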